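(* Let $\delta>0$ and $B\in M_\delta^+$, and let $S=\sqrt B$ be the principal square root of $B$. Then ${\rm Re}\,S$ is positive definite.
   Context: Writing $z=x+iy$ with $x,y$ real matrices, $M_\delta^+=\{z\in{\rm Mat}(n,\mathbb C): z^T=z,\ \delta x+y\text{ and }\delta x-y\text{ positive definite}\}$. Every eigenvalue of a matrix in $M_\delta^+$ has positive real part; the principal square root $\sqrt B$ is defined by holomorphic functional calculus using the branch of $\sqrt\lambda$ on $\{{\rm Re}\,\lambda>0\}$ with $\sqrt\lambda>0$ for $\lambda>0$. ${\rm Re}\,S$ denotes the entrywise real part. *)

theory Defs
  imports "HOL-Complex_Analysis.Complex_Analysis"
begin

definition mRe :: "complex^'n^'n \<Rightarrow> real^'n^'n" where
  "mRe z = (\<chi> i j. Re (z $ i $ j))"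

definition mIm :: "complex^'n^'n \<Rightarrow> real^'n^'n" where
  "mIm z = (\<chi> i j. Im (z $ i $ j))"

definition posdef :: "real^'n^'n \<Rightarrow> bool" where
  "posdef A \<longleftrightarrow> transpose A = A \<and> (\<forall>v. v \<noteq> 0 \<longrightarrow> v \<bullet> (A *v v) > 0)"

definition Mplus :: "real \<Rightarrow> (complex^'n^'n) set" where
  "Mplus \<delta> = {z. transpose z = z \<and> posdef (\<delta> *\<^sub>R mRe z + mIm z)
                 \<and> posdef (\<delta> *\<^sub>R mRe z - mIm z)}"

definition eigval :: "complex^'n^'n \<Rightarrow> complex \<Rightarrow> bool" where
  "eigval B l \<longleftrightarrow> (\<exists>v. v \<noteq> 0 \<and> B *v v = l *s v)"

definition sqrt_circle :: "complex^'n^'n \<Rightarrow> complex \<times> real" where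
  "sqrt_circle B = (SOME (c, r). 0 < r \<and> cball c r \<subseteq> {w. Re w > 0}
                      \<and> (\<forall>l. eigval B l \<longrightarrow> l \<in> ball c r))"

text \<open>Principal square root by holomorphic functional calculus (Cauchy integral)
  using the principal branch csqrt, which is holomorphic on Re > 0.\<close>
definition psqrt :: "complex^'n^'n \<Rightarrow> complex^'n^'n" where
  "psqrt B = (let (c, r) = sqrt_circle B in
     (\<chi> i j. contour_integral (circlepath c r)
              (\<lambda>w. csqrt w * matrix_inv (mat w - B) $ i $ j) / (2 * pi * \<i>)))"

end

theory Submission
  imports Defs
begin

no_notation fps_nth (infixl \<open>$\<close> 75)

text \<open>Adding the two defining inequalities of \<open>M\<^sub>\<delta>\<^sup>+\<close> shows that \<open>X = Re B\<close> is positive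
  definite; as \<open>B\<close> is symmetric, \<open>Re (u\<^sup>* B u) = a\<^sup>T X a + b\<^sup>T X b\<close> for \<open>u = a + i b\<close>, so \<open>B\<close> is
  accretive. Hence the spectrum of \<open>B\<close> lies in the right half-plane, every pencil
  \<open>M(\<theta>) = sin\<^sup>2\<theta> I + cos\<^sup>2\<theta> B\<close> is invertible, and \<open>Re (v\<^sup>T B M(\<theta>)\<^sup>-\<^sup>1 v) > 0\<close> for real \<open>v \<noteq> 0\<close>
  (put \<open>u = M(\<theta>)\<^sup>-\<^sup>1 v\<close>, so that \<open>v = sin\<^sup>2\<theta> u + cos\<^sup>2\<theta> B u\<close>).

  For \<open>Re w > 0\<close> one has \<open>\<surd>w = 2/\<pi> \<integral>\<^sub>0\<^sup>\<pi>\<^sup>/\<^sup>2 w / (sin\<^sup>2\<theta> + w cos\<^sup>2\<theta>) d\<theta>\<close>. Substituting this into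
  the Cauchy integral that defines \<open>\<surd>B\<close> and integrating over the circle first, with
  \<open>\<ointegral> (w I - B)\<^sup>-\<^sup>1 dw = 2\<pi>i I\<close>, gives \<open>\<surd>B = 2/\<pi> \<integral>\<^sub>0\<^sup>\<pi>\<^sup>/\<^sup>2 B M(\<theta>)\<^sup>-\<^sup>1 d\<theta>\<close>. So \<open>v\<^sup>T (Re \<surd>B) v\<close> is the
  integral of a positive function, and \<open>\<surd>B\<close> is symmetric because the resolvents of \<open>B\<close> are.\<close>

lemma matrix_vector_mult_mat: "(mat a :: 'a::semiring_1^'n^'n) *v x = a *s x"
  by (simp add: vec_eq_iff matrix_vector_mult_def mat_def if_distrib if_distribR cong: if_cong)

lemma mat_matrix_mult_nth: "(mat a ** A) $ i $ j = a * A $ i $ j"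
  for A :: "'a::semiring_1^'m^'n"
  by (simp add: matrix_matrix_mult_def mat_def if_distrib if_distribR cong: if_cong)

lemma matrix_mat_mult_nth: "(A ** mat a) $ i $ j = A $ i $ j * a"
  for A :: "'a::semiring_1^'n^'m"
  by (simp add: matrix_matrix_mult_def mat_def if_distrib if_distribR cong: if_cong)

lemma mat_matrix_mult_commute: "mat a ** A = A ** mat a"
  for A :: "'a::comm_semiring_1^'n^'n"
  by (simp add: vec_eq_iff mat_matrix_mult_nth matrix_mat_mult_nth mult.commute)

lemma mat_add: "mat (a + b) = (mat a + mat b :: 'a::monoid_add^'n^'n)"
  by (simp add: vec_eq_iff mat_def)

lemma mat_diff: "mat (a - b) = (mat a - mat b :: 'a::group_add^'n^'n)"
  by (simp add: vec_eq_iff mat_def)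

lemma mat_mult_mat: "mat a ** mat b = (mat (a * b) :: 'a::semiring_1^'n^'n)"
  by (simp add: vec_eq_iff mat_matrix_mult_nth) (simp add: mat_def)

lemma matrix_add_rdistrib: "(A + B) ** C = A ** C + B ** C"
  for A B :: "'a::semiring_1^'m^'n"
  by (simp add: vec_eq_iff matrix_matrix_mult_def distrib_right sum.distrib)

lemma matrix_diff_rdistrib: "(A - B) ** C = A ** C - B ** C"
  for A B :: "'a::ring_1^'m^'n"
  by (simp add: vec_eq_iff matrix_matrix_mult_def left_diff_distrib sum_subtractf)

lemma matrix_diff_ldistrib: "C ** (A - B) = C ** A - C ** B"
  for C :: "'a::ring_1^'m^'n"
  by (simp add: vec_eq_iff matrix_matrix_mult_def right_diff_distrib sum_subtractf)

lemma transpose_mat_diff: "transpose (mat w - B) = mat w - transpose B"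
  by (simp add: vec_eq_iff transpose_def mat_def)

lemma matrix_inv_right: "invertible A \<Longrightarrow> A ** matrix_inv A = mat 1"
  and matrix_inv_left: "invertible A \<Longrightarrow> matrix_inv A ** A = mat 1"
  unfolding invertible_def matrix_inv_def by (metis (mono_tags, lifting) someI_ex)+

lemma invertible_iff_ker: "invertible A \<longleftrightarrow> (\<forall>x. A *v x = 0 \<longrightarrow> x = 0)"
  for A :: "'a::field^'n^'n"
  by (simp add: invertible_left_inverse matrix_left_invertible_ker)

lemma matrix_inv_symmetric:
  fixes A :: "'a::field^'n^'n"
  assumes "invertible A" and "transpose A = A"
  shows "transpose (matrix_inv A) = matrix_inv A"
proof -
  have "transpose (matrix_inv A) ** A = mat 1"
    using arg_cong[OF matrix_inv_right[OF assms(1)], of transpose]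
    by (simp add: matrix_transpose_mul assms(2))
  then have "transpose (matrix_inv A) ** (A ** matrix_inv A) = matrix_inv A"
    by (simp add: matrix_mul_assoc)
  then show ?thesis
    by (simp add: matrix_inv_right assms(1))
qed

lemma matrix_inv_nth_cramer:
  fixes A :: "'a::field^'n^'n"
  assumes "det A \<noteq> 0"
  shows "matrix_inv A $ k $ j = det (\<chi> i l. if l = k then axis j 1 $ i else A $ i $ l) / det A"
proof -
  have "A *v (matrix_inv A *v axis j 1) = axis j 1"
    using assms by (simp add: matrix_vector_mul_assoc matrix_inv_right invertible_det_nz)
  then have "matrix_inv A *v axis j 1 = (\<chi> k. det (\<chi> i l. if l = k then axis j 1 $ i else A $ i $ l) / det A)"
    using cramer[OF assms] by blast
  moreover have "(matrix_inv A *v axis j 1) $ k = matrix_inv A $ k $ j"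
    by (simp add: matrix_vector_mult_def axis_def if_distrib if_distribR cong: if_cong)
  ultimately show ?thesis
    by simp
qed

lemma holomorphic_on_det:
  fixes A :: "complex \<Rightarrow> complex^'n^'n"
  assumes "\<And>i j. (\<lambda>z. A z $ i $ j) holomorphic_on S"
  shows "(\<lambda>z. det (A z)) holomorphic_on S"
  unfolding det_def by (intro holomorphic_intros assms)

lemma holomorphic_on_matrix_inv_nth:
  fixes A :: "complex \<Rightarrow> complex^'n^'n"
  assumes hol: "\<And>i j. (\<lambda>z. A z $ i $ j) holomorphic_on S"
    and det: "\<And>z. z \<in> S \<Longrightarrow> det (A z) \<noteq> 0"
  shows "(\<lambda>z. matrix_inv (A z) $ k $ j) holomorphic_on S"
proof (rule holomorphic_transform)
  have "(\<lambda>z. (\<chi> i l. if l = k then axis j 1 $ i else A z $ i $ l) $ i $ l) holomorphic_on S" for i l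
    by (cases "l = k") (simp_all add: hol)
  then show "(\<lambda>z. det (\<chi> i l. if l = k then axis j 1 $ i else A z $ i $ l) / det (A z)) holomorphic_on S"
    by (intro holomorphic_intros holomorphic_on_det hol det)
qed (simp add: matrix_inv_nth_cramer det)

section \<open>Accretive matrices\<close>

definition cinner :: "complex^'n \<Rightarrow> complex^'n \<Rightarrow> complex" where
  "cinner u v = (\<Sum>i\<in>UNIV. cnj (u $ i) * v $ i)"

definition accretive :: "complex^'n^'n \<Rightarrow> bool" where
  "accretive B \<longleftrightarrow> (\<forall>u. u \<noteq> 0 \<longrightarrow> Re (cinner u (B *v u)) > 0)"

lemma cinner_add_left: "cinner (x + y) u = cinner x u + cinner y u"
  by (simp add: cinner_def distrib_right sum.distrib)

lemma cinner_smult_left: "cinner (a *s x) u = cnj a * cinner x u"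
  by (simp add: cinner_def sum_distrib_left mult.assoc)

lemma cinner_smult_right: "cinner u (a *s x) = a * cinner u x"
  by (simp add: cinner_def sum_distrib_left mult.left_commute)

lemma cinner_self: "cinner u u = of_real (\<Sum>i\<in>UNIV. (cmod (u $ i))\<^sup>2)"
proof -
  have "cnj z * z = of_real ((cmod z)\<^sup>2)" for z
    by (simp only: mult.commute[of "cnj z"] complex_mult_cnj cmod_power2)
  then show ?thesis
    unfolding cinner_def of_real_sum by (rule sum.cong[OF refl])
qed

lemma Re_cinner_self_pos:
  assumes "u \<noteq> 0"
  shows "Re (cinner u u) > 0"
proof -
  obtain i where "u $ i \<noteq> 0"
    using assms by (auto simp: vec_eq_iff)
  then have "0 < (cmod (u $ i))\<^sup>2"
    by simp
  also have "\<dots> \<le> (\<Sum>k\<in>UNIV. (cmod (u $ k))\<^sup>2)"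
    by (rule member_le_sum) auto
  finally show ?thesis
    by (simp add: cinner_self)
qed

lemma accretive_eigval_Re_pos:
  assumes "accretive B" and "eigval B l"
  shows "Re l > 0"
proof -
  obtain u where u: "u \<noteq> 0" "B *v u = l *s u"
    using assms(2) by (auto simp: eigval_def)
  have "0 < Re (cinner u (B *v u))"
    using assms(1) u(1) by (simp add: accretive_def)
  also have "\<dots> = Re l * Re (cinner u u)"
    by (simp add: u(2) cinner_smult_right cinner_self)
  finally show ?thesis
    using Re_cinner_self_pos[OF u(1)] by (simp add: zero_less_mult_iff)
qed

lemma transpose_mRe: "transpose (mRe A) = mRe (transpose A)"
  by (simp add: vec_eq_iff transpose_def mRe_def)

lemma inner_matrix_vector_mult_eq_sum:
  "(v::real^'n) \<bullet> (A *v v) = (\<Sum>i\<in>UNIV. \<Sum>j\<in>UNIV. v $ i * A $ i $ j * v $ j)"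
  by (simp add: inner_vec_def matrix_vector_mult_def sum_distrib_left mult.assoc)

lemma posdef_mRe_if_Mplus:
  assumes "\<delta> > 0" and "B \<in> Mplus \<delta>"
  shows "posdef (mRe B)"
proof -
  have plus: "posdef (\<delta> *\<^sub>R mRe B + mIm B)" and minus: "posdef (\<delta> *\<^sub>R mRe B - mIm B)"
    using assms(2) by (auto simp: Mplus_def)
  have "transpose B = B"
    using assms(2) by (simp add: Mplus_def)
  then have "transpose (mRe B) = mRe B"
    by (simp add: transpose_mRe)
  moreover have "v \<bullet> (mRe B *v v) > 0" if "v \<noteq> 0" for v
  proof -
    have "0 < v \<bullet> ((\<delta> *\<^sub>R mRe B + mIm B) *v v) + v \<bullet> ((\<delta> *\<^sub>R mRe B - mIm B) *v v)"
      using plus minus that by (simp add: posdef_def add_pos_pos)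
    also have "\<dots> = 2 * \<delta> * (v \<bullet> (mRe B *v v))"
      unfolding inner_matrix_vector_mult_eq_sum
      by (simp add: algebra_simps sum.distrib sum_subtractf sum_distrib_left)
    finally show ?thesis
      using assms(1) by (simp add: zero_less_mult_iff)
  qed
  ultimately show ?thesis
    by (simp add: posdef_def)
qed

lemma posdef_quadratic_nonneg: "posdef A \<Longrightarrow> v \<bullet> (A *v v) \<ge> 0"
  by (cases "v = 0") (auto simp: posdef_def intro: less_imp_le)

text \<open>The cross terms involving \<open>Im B\<close> cancel because \<open>B\<close> is symmetric.\<close>

lemma accretive_if_posdef_mRe:
  fixes B :: "complex^'n^'n"
  assumes sym: "transpose B = B" and pos: "posdef (mRe B)"
  shows "accretive B"
  unfolding accretive_def
proof (intro allI impI)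
  fix u :: "complex^'n"
  assume "u \<noteq> 0"
  define a where "a = (\<chi> i. Re (u $ i))"
  define b where "b = (\<chi> i. Im (u $ i))"
  have "a \<noteq> 0 \<or> b \<noteq> 0"
    using \<open>u \<noteq> 0\<close> by (auto simp: a_def b_def vec_eq_iff complex_eq_iff)
  moreover have "a \<bullet> (mRe B *v a) \<ge> 0" "b \<bullet> (mRe B *v b) \<ge> 0"
    using pos by (auto simp: posdef_quadratic_nonneg)
  ultimately have "0 < a \<bullet> (mRe B *v a) + b \<bullet> (mRe B *v b)"
    using pos unfolding posdef_def by (metis add_pos_nonneg add_nonneg_pos)
  have B_sym: "B $ j $ i = B $ i $ j" for i j
    using arg_cong[OF sym, of "\<lambda>A. A $ i $ j"] by (simp add: transpose_def)
  have cross: "(\<Sum>i\<in>UNIV. \<Sum>j\<in>UNIV. (b $ i * a $ j - a $ i * b $ j) * Im (B $ i $ j)) = 0"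
  proof -
    have "(\<Sum>i\<in>UNIV. \<Sum>j\<in>UNIV. a $ i * b $ j * Im (B $ i $ j))
        = (\<Sum>i\<in>UNIV. \<Sum>j\<in>UNIV. b $ i * a $ j * Im (B $ i $ j))"
      by (subst sum.swap) (simp add: B_sym mult.commute)
    then show ?thesis
      by (simp add: left_diff_distrib sum_subtractf)
  qed
  have "Re (cinner u (B *v u))
      = (\<Sum>i\<in>UNIV. \<Sum>j\<in>UNIV. (a $ i * a $ j + b $ i * b $ j) * Re (B $ i $ j)
                             + (b $ i * a $ j - a $ i * b $ j) * Im (B $ i $ j))"
    by (simp add: cinner_def matrix_vector_mult_def sum_distrib_left a_def b_def algebra_simps)
  also have "\<dots> = a \<bullet> (mRe B *v a) + b \<bullet> (mRe B *v b)"
    unfolding inner_matrix_vector_mult_eq_sum sum.distrib cross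
    by (simp add: mRe_def algebra_simps sum.distrib)
  finally show "Re (cinner u (B *v u)) > 0"
    using \<open>0 < a \<bullet> (mRe B *v a) + b \<bullet> (mRe B *v b)\<close> by simp
qed

definition pencil :: "complex \<Rightarrow> complex \<Rightarrow> complex^'n^'n \<Rightarrow> complex^'n^'n" where
  "pencil a b B = mat a + mat b ** B"

lemma pencil_nth: "pencil a b B $ i $ j = (if i = j then a else 0) + b * B $ i $ j"
  by (simp add: pencil_def mat_matrix_mult_nth) (simp add: mat_def)

lemma pencil_vector_mult: "pencil a b B *v u = a *s u + b *s (B *v u)"
  by (simp add: pencil_def matrix_vector_mult_add_rdistrib matrix_vector_mult_mat
      flip: matrix_vector_mul_assoc)

lemma Re_cinner_pencil_pos:
  assumes "accretive B" and "0 \<le> a" "0 \<le> b" "0 < a + b" and "u \<noteq> 0"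
  shows "Re (cinner u (pencil (of_real a) (of_real b) B *v u)) > 0"
proof -
  have "Re (cinner u (pencil (of_real a) (of_real b) B *v u))
      = a * Re (cinner u u) + b * Re (cinner u (B *v u))"
    by (simp add: pencil_vector_mult cinner_def sum.distrib sum_distrib_left algebra_simps)
  moreover have "Re (cinner u u) > 0" "Re (cinner u (B *v u)) > 0"
    using Re_cinner_self_pos assms(1,5) by (auto simp: accretive_def)
  ultimately show ?thesis
    using assms(2-4) by (smt (verit) mult_nonneg_nonneg mult_pos_pos)
qed

lemma invertible_pencil:
  assumes "accretive B" and "0 \<le> a" "0 \<le> b" "0 < a + b"
  shows "invertible (pencil (of_real a) (of_real b) B)"
  unfolding invertible_iff_ker
proof (intro allI impI)
  fix u
  assume "pencil (of_real a) (of_real b) B *v u = 0"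
  then have "Re (cinner u (pencil (of_real a) (of_real b) B *v u)) = 0"
    by (simp add: cinner_def)
  then show "u = 0"
    using Re_cinner_pencil_pos[OF assms] by force
qed

lemma Re_cinner_pencil_inverse_pos:
  assumes "accretive B" and "0 \<le> a" "0 \<le> b" "0 < a + b" and "x \<noteq> 0"
  shows "Re (cinner x (B *v (matrix_inv (pencil (of_real a) (of_real b) B) *v x))) > 0"
proof -
  define u where "u = matrix_inv (pencil (of_real a) (of_real b) B) *v x"
  have "x = pencil (of_real a) (of_real b) B *v u"
    using invertible_pencil[OF assms(1-4)] by (simp add: u_def matrix_vector_mul_assoc matrix_inv_right)
  then have x_eq: "x = of_real a *s u + of_real b *s (B *v u)"
    by (simp only: pencil_vector_mult)
  then have "u \<noteq> 0"
    using assms(5) by auto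
  then have pos_u: "Re (cinner u (B *v u)) > 0"
    using assms(1) by (simp add: accretive_def)
  then have "B *v u \<noteq> 0"
    by (auto simp: cinner_def)
  then have pos_Bu: "Re (cinner (B *v u) (B *v u)) > 0"
    by (rule Re_cinner_self_pos)
  have "Re (cinner x (B *v u)) = a * Re (cinner u (B *v u)) + b * Re (cinner (B *v u) (B *v u))"
    by (simp add: x_eq cinner_add_left cinner_smult_left)
  then show ?thesis
    using pos_u pos_Bu assms(2-4) unfolding u_def
    by (smt (verit) mult_nonneg_nonneg mult_pos_pos)
qed

definition qform :: "real^'n \<Rightarrow> complex^'n^'n \<Rightarrow> complex" where
  "qform v A = (\<Sum>i\<in>UNIV. \<Sum>j\<in>UNIV. of_real (v $ i * v $ j) * A $ i $ j)"

lemma Re_qform: "Re (qform v A) = v \<bullet> (mRe A *v v)"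
  by (simp add: qform_def inner_matrix_vector_mult_eq_sum mRe_def Re_sum mult_ac)

lemma qform_eq_cinner: "qform v A = cinner (\<chi> i. of_real (v $ i)) (A *v (\<chi> i. of_real (v $ i)))"
  by (simp add: qform_def cinner_def matrix_vector_mult_def sum_distrib_left mult_ac)

lemma Re_qform_pencil_inverse_pos:
  assumes "accretive B" and "0 \<le> a" "0 \<le> b" "0 < a + b" and "v \<noteq> 0"
  shows "Re (qform v (B ** matrix_inv (pencil (of_real a) (of_real b) B))) > 0"
proof -
  have "(\<chi> i. complex_of_real (v $ i)) \<noteq> 0"
    using assms(5) by (auto simp: vec_eq_iff)
  then show ?thesis
    unfolding qform_eq_cinner matrix_vector_mul_assoc[symmetric]
    by (rule Re_cinner_pencil_inverse_pos[OF assms(1-4)])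
qed

section \<open>The spectrum\<close>

lemma eigval_iff_det: "eigval B l \<longleftrightarrow> det (mat l - B) = 0"
  for B :: "complex^'n^'n"
proof -
  have "(mat l - B) *v v = 0 \<longleftrightarrow> B *v v = l *s v" for v
    by (simp add: matrix_vector_mult_diff_rdistrib matrix_vector_mult_mat eq_commute[of "B *v v"])
  moreover have "det (mat l - B) \<noteq> 0 \<longleftrightarrow> (\<forall>v. (mat l - B) *v v = 0 \<longrightarrow> v = 0)"
    by (simp add: invertible_det_nz[symmetric] invertible_iff_ker)
  ultimately show ?thesis
    unfolding eigval_def by blast
qed

lemma invertible_mat_diff_iff: "invertible (mat w - B) \<longleftrightarrow> \<not> eigval B w"
  for B :: "complex^'n^'n"
  by (simp add: eigval_iff_det invertible_det_nz)

lemma holomorphic_on_mat_diff_nth: "(\<lambda>z. (mat z - B) $ i $ j) holomorphic_on S"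
  for B :: "complex^'n^'n"
  by (cases "i = j") (simp_all add: mat_def holomorphic_intros)

lemma closed_eigvals: "closed {l. eigval B l}"
  for B :: "complex^'n^'n"
proof -
  have "continuous_on UNIV (\<lambda>l. det (mat l - B))"
    by (intro holomorphic_on_imp_continuous_on holomorphic_on_det holomorphic_on_mat_diff_nth)
  then have "closed ((\<lambda>l. det (mat l - B)) -` {0})"
    by (simp add: continuous_on_closed_vimage)
  then show ?thesis
    by (simp add: eigval_iff_det vimage_def)
qed

definition matrix_l1_norm :: "'a::real_normed_vector^'n^'m \<Rightarrow> real" where
  "matrix_l1_norm A = (\<Sum>i\<in>UNIV. \<Sum>j\<in>UNIV. norm (A $ i $ j))"

lemma norm_matrix_vector_mult_le: "norm (A *v x) \<le> matrix_l1_norm A * norm x"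
  for A :: "'a::real_normed_algebra_1^'n^'m"
proof -
  have "norm (A *v x) \<le> (\<Sum>i\<in>UNIV. norm ((A *v x) $ i))"
    by (simp add: norm_vec_def L2_set_le_sum)
  also have "\<dots> \<le> (\<Sum>i\<in>UNIV. \<Sum>j\<in>UNIV. norm (A $ i $ j) * norm x)"
  proof (rule sum_mono)
    fix i
    have "norm ((A *v x) $ i) \<le> (\<Sum>j\<in>UNIV. norm (A $ i $ j * x $ j))"
      unfolding matrix_vector_mult_def by (simp add: norm_sum)
    also have "\<dots> \<le> (\<Sum>j\<in>UNIV. norm (A $ i $ j) * norm x)"
      by (intro sum_mono order_trans[OF norm_mult_ineq] mult_left_mono
        Finite_Cartesian_Product.norm_nth_le norm_ge_zero)
    finally show "norm ((A *v x) $ i) \<le> (\<Sum>j\<in>UNIV. norm (A $ i $ j) * norm x)" .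
  qed
  finally show ?thesis
    by (simp add: matrix_l1_norm_def sum_distrib_right)
qed

lemma norm_vector_smult: "norm (a *s x) = norm a * norm x"
  for a :: "'a::real_normed_field" and x :: "'a^'n"
  by (simp add: norm_vec_def L2_set_right_distrib norm_mult)

lemma eigval_norm_le:
  assumes "eigval B l"
  shows "cmod l \<le> matrix_l1_norm B"
proof -
  obtain v where v: "v \<noteq> 0" "B *v v = l *s v"
    using assms by (auto simp: eigval_def)
  then have "cmod l * norm v \<le> matrix_l1_norm B * norm v"
    using norm_matrix_vector_mult_le[of B v] by (simp add: norm_vector_smult)
  then show ?thesis
    using v(1) by simp
qed

lemma compact_eigvals: "compact {l. eigval B l}"
  for B :: "complex^'n^'n"
  unfolding compact_eq_bounded_closed bounded_iff
  using closed_eigvals eigval_norm_le by blast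

lemma cmod_real_centre_diff_lt:
  assumes "0 < a" "a \<le> Re l" "cmod l \<le> m"
  shows "cmod (of_real (m\<^sup>2 / a + a + 1) - l) < m\<^sup>2 / a + a / 2 + 1"
proof -
  define R where "R = m\<^sup>2 / a + a + 1"
  have Ra: "R * a = m\<^sup>2 + a * a + a"
    using assms(1) by (simp add: R_def field_simps)
  have "R > a"
    using assms(1) by (simp add: R_def add_nonneg_pos)
  have "(Re l)\<^sup>2 + (Im l)\<^sup>2 \<le> m\<^sup>2"
    using power_mono[OF assms(3) norm_ge_zero, of 2] by (simp add: cmod_power2)
  moreover have "R * a \<le> R * Re l"
    using assms(2) \<open>R > a\<close> assms(1) by simp
  moreover have "(cmod (of_real R - l))\<^sup>2 = R * R - 2 * (R * Re l) + ((Re l)\<^sup>2 + (Im l)\<^sup>2)"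
    unfolding cmod_power2 by (simp add: power2_eq_square algebra_simps)
  moreover have "(R - a / 2)\<^sup>2 = R * R - R * a + a * a / 4"
    by (simp add: power2_eq_square algebra_simps)
  ultimately have "(cmod (of_real R - l))\<^sup>2 < (R - a / 2)\<^sup>2"
    using Ra assms(1) mult_pos_pos[OF assms(1) assms(1)] by linarith
  then have "cmod (of_real R - l) < R - a / 2"
    using \<open>R > a\<close> assms(1) by (simp add: power2_less_imp_less)
  then show ?thesis
    by (simp add: R_def)
qed

lemma compact_in_right_half_plane_imp_ball:
  fixes K :: "complex set"
  assumes "compact K" and "K \<subseteq> {w. Re w > 0}"
  obtains c r where "0 < r" "cball c r \<subseteq> {w. Re w > 0}" "K \<subseteq> ball c r"
proof -
  obtain a where a: "0 < a" "\<And>l. l \<in> K \<Longrightarrow> a \<le> Re l"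
  proof (cases "K = {}")
    case False
    then obtain l0 where "l0 \<in> K" "\<And>l. l \<in> K \<Longrightarrow> Re l0 \<le> Re l"
      using continuous_attains_inf[OF assms(1), of Re] continuous_on_Re[OF continuous_on_id]
      by auto
    then show ?thesis
      using that[of "Re l0"] assms(2) by auto
  qed (use that[of 1] in auto)
  obtain m where m: "\<And>l. l \<in> K \<Longrightarrow> cmod l \<le> m"
    using compact_imp_bounded[OF assms(1)] unfolding bounded_iff by blast
  define c where "c = complex_of_real (m\<^sup>2 / a + a + 1)"
  define r where "r = m\<^sup>2 / a + a / 2 + 1"
  have "0 < r"
    using a(1) by (simp add: r_def add_nonneg_pos)
  moreover have "cball c r \<subseteq> {w. Re w > 0}"
  proof
    fix w :: complex
    assume "w \<in> cball c r"
    then have "\<bar>Re (c - w)\<bar> \<le> r"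
      using abs_Re_le_cmod[of "c - w"] by (simp add: dist_norm)
    then show "w \<in> {w. Re w > 0}"
      using a(1) by (simp add: c_def r_def)
  qed
  moreover have "K \<subseteq> ball c r"
    using cmod_real_centre_diff_lt[OF a(1) a(2) m] by (auto simp: c_def r_def dist_norm)
  ultimately show ?thesis
    using that by blast
qed

lemma sqrt_circle:
  fixes B :: "complex^'n^'n"
  assumes "accretive B"
  obtains c r where "sqrt_circle B = (c, r)" "0 < r" "cball c r \<subseteq> {w. Re w > 0}"
    "\<And>l. eigval B l \<Longrightarrow> l \<in> ball c r"
proof -
  let ?P = "\<lambda>(c, r). 0 < r \<and> cball c r \<subseteq> {w. Re w > 0} \<and> (\<forall>l. eigval B l \<longrightarrow> l \<in> ball c r)"
  have "{l. eigval B l} \<subseteq> {w. Re w > 0}"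
    using accretive_eigval_Re_pos[OF assms] by blast
  then obtain c r where "0 < r" "cball c r \<subseteq> {w. Re w > 0}" "{l. eigval B l} \<subseteq> ball c r"
    using compact_in_right_half_plane_imp_ball[OF compact_eigvals] by metis
  then have "?P (c, r)"
    by auto
  then have "?P (sqrt_circle B)"
    unfolding sqrt_circle_def by (rule someI)
  then show ?thesis
    using that by (cases "sqrt_circle B") simp
qed

section \<open>Contour integrals of the resolvent\<close>

definition resolvent :: "complex^'n^'n \<Rightarrow> complex \<Rightarrow> complex^'n^'n" where
  "resolvent B w = matrix_inv (mat w - B)"

lemma holomorphic_on_resolvent_nth:
  assumes "\<And>w. w \<in> S \<Longrightarrow> \<not> eigval B w"
  shows "(\<lambda>w. resolvent B w $ i $ j) holomorphic_on S"
  unfolding resolvent_def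
  by (rule holomorphic_on_matrix_inv_nth[OF holomorphic_on_mat_diff_nth]) (use assms in \<open>auto simp: eigval_iff_det\<close>)

lemma resolvent_shift:
  assumes "\<not> eigval B w"
  shows "mat (w - c) ** resolvent B w = mat 1 + (B - mat c) ** resolvent B w"
proof -
  have "mat (w - c) = (mat w - B) + (B - mat c)"
    by (simp add: mat_diff)
  then have "mat (w - c) ** resolvent B w
      = (mat w - B) ** resolvent B w + (B - mat c) ** resolvent B w"
    by (simp only: matrix_add_rdistrib)
  also have "(mat w - B) ** resolvent B w = mat 1"
    using assms by (simp add: resolvent_def matrix_inv_right invertible_mat_diff_iff)
  finally show ?thesis .
qed

lemma resolvent_nth_shift:
  assumes "\<not> eigval B w" and "w \<noteq> c"
  shows "resolvent B w $ i $ j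
       = (if i = j then 1 else 0) / (w - c) + ((B - mat c) ** resolvent B w) $ i $ j / (w - c)"
proof -
  have "(w - c) * resolvent B w $ i $ j = (if i = j then 1 else 0) + ((B - mat c) ** resolvent B w) $ i $ j"
    using arg_cong[OF resolvent_shift[OF assms(1), of c], of "\<lambda>M. M $ i $ j"]
    by (simp add: mat_matrix_mult_nth) (simp add: mat_def)
  then have "resolvent B w $ i $ j = ((if i = j then 1 else 0) + ((B - mat c) ** resolvent B w) $ i $ j) / (w - c)"
    using assms(2) by (simp add: nonzero_eq_divide_eq mult.commute)
  then show ?thesis
    by (simp add: add_divide_distrib)
qed

lemma norm_axis_complex: "norm (axis j (1::complex) :: complex^'n) = 1"
  by (simp add: norm_vec_def L2_set_def axis_def if_distrib if_distribR cong: if_cong)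

lemma norm_resolvent_nth_le:
  fixes B :: "complex^'n^'n"
  assumes K: "matrix_l1_norm (B - mat c) < cmod (w - c)"
  shows "cmod (resolvent B w $ i $ j) \<le> 1 / (cmod (w - c) - matrix_l1_norm (B - mat c))"
proof -
  have "\<not> eigval B w"
  proof
    assume "eigval B w"
    then have "eigval (B - mat c) (w - c)"
      by (auto simp: eigval_def matrix_vector_mult_diff_rdistrib matrix_vector_mult_mat
          vector_sub_rdistrib)
    then show False
      using eigval_norm_le K by fastforce
  qed
  define x where "x = resolvent B w *v axis j 1"
  have "(w - c) *s x = axis j 1 + (B - mat c) *v x"
    using arg_cong[OF resolvent_shift[OF \<open>\<not> eigval B w\<close>, of c], of "\<lambda>M. M *v axis j 1"]
    by (simp add: x_def matrix_vector_mult_add_rdistrib matrix_vector_mult_mat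
        flip: matrix_vector_mul_assoc)
  then have "cmod (w - c) * norm x \<le> 1 + matrix_l1_norm (B - mat c) * norm x"
    by (metis norm_vector_smult norm_axis_complex norm_triangle_le add_left_mono
        norm_matrix_vector_mult_le)
  then have "norm x \<le> 1 / (cmod (w - c) - matrix_l1_norm (B - mat c))"
    using K by (simp add: field_simps)
  moreover have "resolvent B w $ i $ j = x $ i"
    by (simp add: x_def matrix_vector_mult_def axis_def if_distrib if_distribR cong: if_cong)
  ultimately show ?thesis
    using Finite_Cartesian_Product.norm_nth_le[of x i] by simp
qed

lemma norm_matrix_mult_resolvent_nth_le:
  fixes B :: "complex^'n^'n"
  assumes w: "2 * matrix_l1_norm (B - mat c) + 1 \<le> cmod (w - c)"
  shows "cmod (((B - mat c) ** resolvent B w) $ i $ j) \<le> 2 * matrix_l1_norm (B - mat c) / cmod (w - c)"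
proof -
  define A where "A = B - mat c"
  define K where "K = matrix_l1_norm A"
  have "0 \<le> K"
    by (simp add: K_def matrix_l1_norm_def sum_nonneg)
  have R_bound: "cmod (resolvent B w $ k $ j) \<le> 2 / cmod (w - c)" for k
  proof -
    have "cmod (resolvent B w $ k $ j) \<le> 1 / (cmod (w - c) - K)"
      using norm_resolvent_nth_le[of B c w k j] w \<open>0 \<le> K\<close> by (simp add: K_def A_def)
    also have "\<dots> \<le> 2 / cmod (w - c)"
      using w \<open>0 \<le> K\<close> by (simp add: K_def A_def divide_simps)
    finally show ?thesis .
  qed
  have "cmod ((A ** resolvent B w) $ i $ j) \<le> (\<Sum>k\<in>UNIV. cmod (A $ i $ k) * (2 / cmod (w - c)))"
    unfolding matrix_matrix_mult_def vec_lambda_beta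
    by (intro order_trans[OF norm_sum] sum_mono, unfold norm_mult, intro mult_left_mono)
      (simp_all add: R_bound)
  also have "\<dots> \<le> K * (2 / cmod (w - c))"
    unfolding sum_distrib_right[symmetric] K_def matrix_l1_norm_def
    by (intro mult_right_mono member_le_sum) (auto intro: sum_nonneg)
  finally show ?thesis
    by (simp add: A_def K_def mult.commute)
qed

lemma homotopic_loops_concentric_circlepaths:
  assumes "0 \<le> r" "r \<le> \<rho>" and "{w. r \<le> cmod (w - c) \<and> cmod (w - c) \<le> \<rho>} \<subseteq> U"
  shows "homotopic_loops U (circlepath c r) (circlepath c \<rho>)"
proof (rule homotopic_loops_linear)
  fix t :: real
  define e where "e = exp (2 * of_real pi * \<i> * of_real t)"
  show "closed_segment (circlepath c r t) (circlepath c \<rho> t) \<subseteq> U"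
  proof
    fix z
    assume "z \<in> closed_segment (circlepath c r t) (circlepath c \<rho> t)"
    then obtain u where u: "0 \<le> u" "u \<le> 1" "z = (1 - u) *\<^sub>R (c + r * e) + u *\<^sub>R (c + \<rho> * e)"
      by (auto simp: closed_segment_def circlepath e_def)
    define s where "s = (1 - u) * r + u * \<rho>"
    have "r \<le> s" "s \<le> \<rho>"
      using u(1,2) assms(1,2) mult_left_mono[of r \<rho> u] mult_left_mono[of r \<rho> "1 - u"]
      by (simp_all add: s_def algebra_simps)
    have "z - c = of_real s * e"
      by (simp add: u(3) s_def scaleR_conv_of_real algebra_simps)
    then have "cmod (z - c) = s"
      using \<open>r \<le> s\<close> assms(1) by (simp add: norm_mult e_def)
    then show "z \<in> U"
      using assms(3) \<open>r \<le> s\<close> \<open>s \<le> \<rho>\<close> by auto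
  qed
qed auto

lemma has_contour_integral_circlepath_larger:
  fixes g :: "complex \<Rightarrow> complex"
  assumes U: "open U" "g holomorphic_on U" "{w. r \<le> cmod (w - c)} \<subseteq> U" and "0 < r" "r \<le> \<rho>"
  shows "(g has_contour_integral contour_integral (circlepath c r) g) (circlepath c \<rho>)"
proof -
  have "homotopic_loops U (circlepath c r) (circlepath c \<rho>)"
    using assms by (intro homotopic_loops_concentric_circlepaths) auto
  then have "contour_integral (circlepath c r) g = contour_integral (circlepath c \<rho>) g"
    by (rule Cauchy_theorem_homotopic_loops[OF _ U(1,2)]) auto
  moreover have "path_image (circlepath c \<rho>) \<subseteq> U"
    using assms(3-5) by (auto simp: dist_norm norm_minus_commute)
  then have "g contour_integrable_on (circlepath c \<rho>)"
    by (intro contour_integrable_holomorphic_simple[OF U(2,1)]) auto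
  ultimately show ?thesis
    by (simp add: has_contour_integral_integral)
qed

text \<open>The integral does not depend on the radius, and over the circle of radius \<open>\<rho>\<close> it is at most
  \<open>2\<pi>M/\<rho>\<close>.\<close>

lemma has_contour_integral_circlepath_0_if_decay:
  fixes g :: "complex \<Rightarrow> complex"
  assumes U: "open U" "g holomorphic_on U" "{w. r \<le> cmod (w - c)} \<subseteq> U" and "0 < r"
    and decay: "\<And>w. \<rho>0 \<le> cmod (w - c) \<Longrightarrow> cmod (g w) \<le> M / (cmod (w - c))\<^sup>2"
  shows "(g has_contour_integral 0) (circlepath c r)"
proof -
  define I where "I = contour_integral (circlepath c r) g"
  have "cmod I \<le> 0 + e" if "e > 0" for e
  proof -
    define M' where "M' = max M 0"
    define \<rho> where "\<rho> = max (max r \<rho>0) (2 * pi * M' / e) + 1"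
    have "r \<le> \<rho>" "\<rho>0 \<le> \<rho>" "2 * pi * M' / e < \<rho>"
      by (auto simp: \<rho>_def)
    then have "0 < \<rho>"
      using \<open>0 < r\<close> by linarith
    have "cmod (g w) \<le> M' / \<rho>\<^sup>2" if "cmod (w - c) = \<rho>" for w
    proof -
      have "M / \<rho>\<^sup>2 \<le> M' / \<rho>\<^sup>2"
        by (simp add: M'_def divide_right_mono)
      then show ?thesis
        using decay[of w] that \<open>\<rho>0 \<le> \<rho>\<close> by simp
    qed
    then have "cmod I \<le> M' / \<rho>\<^sup>2 * (2 * pi * \<rho>)"
      using has_contour_integral_circlepath_larger[OF U \<open>0 < r\<close> \<open>r \<le> \<rho>\<close>] \<open>0 < \<rho>\<close>
      unfolding I_def by (intro has_contour_integral_bound_circlepath) (auto simp: M'_def)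
    also have "\<dots> = 2 * pi * M' / \<rho>"
      by (simp add: power2_eq_square)
    also have "\<dots> \<le> e"
      using \<open>2 * pi * M' / e < \<rho>\<close> \<open>0 < \<rho>\<close> \<open>e > 0\<close> by (simp add: field_simps)
    finally show ?thesis
      by simp
  qed
  then have "I = 0"
    using field_le_epsilon[of "cmod I" 0] by simp
  then show ?thesis
    using has_contour_integral_circlepath_larger[OF U \<open>0 < r\<close> order_refl] by (simp add: I_def)
qed

text \<open>Since \<open>(w - c) R(w) = I + (B - c I) R(w)\<close>, the resolvent is \<open>I/(w - c)\<close> plus a
  term of order \<open>|w - c|\<^sup>-\<^sup>2\<close>, whose integral vanishes.\<close>

lemma has_contour_integral_resolvent_nth:
  fixes B :: "complex^'n^'n"
  assumes "0 < r" and spec: "\<And>l. eigval B l \<Longrightarrow> l \<in> ball c r"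
  shows "((\<lambda>w. resolvent B w $ i $ j) has_contour_integral (if i = j then 2 * of_real pi * \<i> else 0))
           (circlepath c r)"
proof -
  define U where "U = - insert c {l. eigval B l}"
  have "open U"
    unfolding U_def by (intro open_Compl closed_insert closed_eigvals)
  have not_eigval: "\<not> eigval B w" if "w \<in> U" for w
    using that by (simp add: U_def)
  have annulus: "{w. r \<le> cmod (w - c)} \<subseteq> U"
    using spec \<open>0 < r\<close> by (force simp: U_def dist_norm norm_minus_commute)
  define A where "A = B - mat c"
  define K where "K = matrix_l1_norm A"
  define g where "g w = (A ** resolvent B w) $ i $ j / (w - c)" for w
  have "(\<lambda>w. (A ** resolvent B w) $ i $ j) holomorphic_on U"
    unfolding matrix_matrix_mult_def vec_lambda_beta
    by (intro holomorphic_intros holomorphic_on_resolvent_nth not_eigval)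
  then have "g holomorphic_on U"
    unfolding g_def by (intro holomorphic_intros) (auto simp: U_def)
  moreover have "cmod (g w) \<le> 2 * K / (cmod (w - c))\<^sup>2" if "2 * K + 1 \<le> cmod (w - c)" for w
    using divide_right_mono[OF norm_matrix_mult_resolvent_nth_le[OF that[unfolded K_def A_def]],
        of "cmod (w - c)"]
    by (simp add: g_def A_def K_def norm_divide power2_eq_square)
  ultimately have "(g has_contour_integral 0) (circlepath c r)"
    using has_contour_integral_circlepath_0_if_decay[OF \<open>open U\<close> _ annulus \<open>0 < r\<close>] by blast
  moreover have "((\<lambda>w. (if i = j then 1 else 0) / (w - c)) has_contour_integral
      (2 * of_real pi * \<i> * (if i = j then 1 else 0))) (circlepath c r)"
    using Cauchy_integral_circlepath_simple[of "\<lambda>_. if i = j then 1 else 0" c r c] \<open>0 < r\<close> by simp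
  ultimately have "((\<lambda>w. (if i = j then 1 else 0) / (w - c) + g w) has_contour_integral
      (if i = j then 2 * of_real pi * \<i> else 0)) (circlepath c r)"
    using has_contour_integral_add by fastforce
  then show ?thesis
  proof (rule has_contour_integral_eq)
    fix w
    assume "w \<in> path_image (circlepath c r)"
    then have "w \<in> U" "w \<noteq> c"
      using annulus \<open>0 < r\<close> by (auto simp: dist_norm norm_minus_commute)
    show "(if i = j then 1 else 0) / (w - c) + g w = resolvent B w $ i $ j"
      using resolvent_nth_shift[OF not_eigval[OF \<open>w \<in> U\<close>] \<open>w \<noteq> c\<close>] by (simp add: g_def A_def)
  qed
qed

lemma add_mult_nonzero_if_Re_pos:
  assumes "0 \<le> a" "0 \<le> b" "0 < a + b" and "Re w > 0"
  shows "of_real a + of_real b * w \<noteq> 0"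
proof -
  have "b * Re w \<ge> 0" "b = 0 \<or> b * Re w > 0"
    using assms(2,4) by (auto simp: zero_less_mult_iff)
  then have "Re (of_real a + of_real b * w) > 0"
    using assms(1,3) by auto
  then show ?thesis
    by (metis less_irrefl zero_complex.simps(1))
qed

lemma pencil_resolvent_identity:
  fixes B :: "complex^'n^'n"
  assumes "invertible (pencil a b B)" and "\<not> eigval B w"
  shows "mat (a + b * w) ** (B ** matrix_inv (pencil a b B) ** resolvent B w)
       = mat w ** resolvent B w - mat a ** matrix_inv (pencil a b B)"
proof -
  define M where "M = pencil a b B"
  define R where "R = resolvent B w"
  have M: "M ** matrix_inv M = mat 1" "matrix_inv M ** M = mat 1"
    using assms(1) by (simp_all add: M_def matrix_inv_right matrix_inv_left)
  have R: "(mat w - B) ** R = mat 1"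
    using assms(2) by (simp add: R_def resolvent_def matrix_inv_right invertible_mat_diff_iff)
  have "mat (a + b * w) = M + mat b ** (mat w - B)"
    by (simp add: M_def pencil_def matrix_diff_ldistrib mat_mult_mat mat_add)
  then have DR: "mat (a + b * w) ** R = M ** R + mat b"
    by (simp add: matrix_add_rdistrib R flip: matrix_mul_assoc)
  have BR: "B ** R = mat w ** R - mat 1"
    using R by (simp add: matrix_diff_rdistrib algebra_simps)
  have "B ** matrix_inv M ** mat b = mat b ** (B ** matrix_inv M)"
    by (rule mat_matrix_mult_commute[symmetric])
  also have "\<dots> = mat b ** B ** matrix_inv M"
    by (rule matrix_mul_assoc)
  also have "\<dots> = (M - mat a) ** matrix_inv M"
    by (simp add: M_def pencil_def)
  also have "\<dots> = mat 1 - mat a ** matrix_inv M"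
    by (simp add: matrix_diff_rdistrib M)
  finally have BMb: "B ** matrix_inv M ** mat b = mat 1 - mat a ** matrix_inv M" .
  have "mat (a + b * w) ** (B ** matrix_inv M ** R) = B ** (matrix_inv M ** (mat (a + b * w) ** R))"
    by (metis mat_matrix_mult_commute matrix_mul_assoc)
  also have "\<dots> = B ** R + B ** matrix_inv M ** mat b"
    by (simp add: DR matrix_add_ldistrib matrix_mul_assoc M)
  also have "\<dots> = mat w ** R - mat a ** matrix_inv M"
    by (simp add: BR BMb)
  finally show ?thesis
    by (simp add: M_def R_def)
qed

lemma has_contour_integral_matrix_mult_resolvent_nth:
  fixes B :: "complex^'n^'n"
  assumes "0 < r" and "\<And>l. eigval B l \<Longrightarrow> l \<in> ball c r"
  shows "((\<lambda>w. (X ** resolvent B w) $ i $ j) has_contour_integral (2 * of_real pi * \<i> * X $ i $ j))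
           (circlepath c r)"
proof -
  have "((\<lambda>w. \<Sum>k\<in>UNIV. X $ i $ k * resolvent B w $ k $ j) has_contour_integral
      (\<Sum>k\<in>UNIV. X $ i $ k * (if k = j then 2 * of_real pi * \<i> else 0))) (circlepath c r)"
    by (intro has_contour_integral_sum has_contour_integral_lmul has_contour_integral_resolvent_nth assms)
      simp
  then show ?thesis
    by (simp add: matrix_matrix_mult_def if_distrib if_distribR mult.commute cong: if_cong)
qed

text \<open>With \<open>M = a I + b B\<close>, partial fractions give \<open>w/(a + b w) R(w) = a M\<^sup>-\<^sup>1/(a + b w) + B M\<^sup>-\<^sup>1 R(w)\<close>;
  the first term is holomorphic in the right half-plane and contributes nothing.\<close>

lemma has_contour_integral_pencil_resolvent_nth:
  fixes B :: "complex^'n^'n" and a b :: real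
  assumes "accretive B" and "0 \<le> a" "0 \<le> b" "0 < a + b"
    and "0 < r" "cball c r \<subseteq> {w. Re w > 0}" and spec: "\<And>l. eigval B l \<Longrightarrow> l \<in> ball c r"
  shows "((\<lambda>w. w / (of_real a + of_real b * w) * resolvent B w $ i $ j) has_contour_integral
           (2 * of_real pi * \<i> * (B ** matrix_inv (pencil (of_real a) (of_real b) B)) $ i $ j))
           (circlepath c r)"
proof -
  define M where "M = pencil (of_real a) (of_real b) B"
  define D where "D w = of_real a + of_real b * w" for w :: complex
  have D_nz: "D w \<noteq> 0" if "Re w > 0" for w
    unfolding D_def by (rule add_mult_nonzero_if_Re_pos[OF assms(2-4) that])
  have circle: "path_image (circlepath c r) \<subseteq> {w. Re w > 0}"
    using assms(5,6) by (auto simp: sphere_cball[THEN subsetD])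
  have "((\<lambda>w. 1 / D w) has_contour_integral 0) (circlepath c r)"
  proof (rule Cauchy_theorem_convex_simple[OF _ convex_halfspace_Re_gt valid_path_circlepath circle])
    show "(\<lambda>w. 1 / D w) holomorphic_on {w. 0 < Re w}"
      using D_nz unfolding D_def by (intro holomorphic_intros) auto
  qed simp
  then have "((\<lambda>w. of_real a * matrix_inv M $ i $ j * (1 / D w) + (B ** matrix_inv M ** resolvent B w) $ i $ j)
      has_contour_integral (of_real a * matrix_inv M $ i $ j * 0 + 2 * of_real pi * \<i> * (B ** matrix_inv M) $ i $ j))
      (circlepath c r)"
    by (intro has_contour_integral_add has_contour_integral_lmul
        has_contour_integral_matrix_mult_resolvent_nth assms(5) spec)
  then have "((\<lambda>w. of_real a * matrix_inv M $ i $ j * (1 / D w) + (B ** matrix_inv M ** resolvent B w) $ i $ j)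
      has_contour_integral (2 * of_real pi * \<i> * (B ** matrix_inv M) $ i $ j)) (circlepath c r)"
    by (simp only: mult_zero_right add_0)
  then show ?thesis
    unfolding M_def[symmetric]
  proof (rule has_contour_integral_eq)
    fix w
    assume "w \<in> path_image (circlepath c r)"
    then have "Re w > 0" "\<not> eigval B w"
      using circle spec[of w] by auto
    have "D w * (B ** matrix_inv M ** resolvent B w) $ i $ j
        = w * resolvent B w $ i $ j - of_real a * matrix_inv M $ i $ j"
      using arg_cong[OF pencil_resolvent_identity[OF invertible_pencil[OF assms(1-4)] \<open>\<not> eigval B w\<close>],
          of "\<lambda>X. X $ i $ j"]
      by (simp add: mat_matrix_mult_nth M_def D_def)
    then show "of_real a * matrix_inv M $ i $ j * (1 / D w) + (B ** matrix_inv M ** resolvent B w) $ i $ j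
        = w / (of_real a + of_real b * w) * resolvent B w $ i $ j"
      using D_nz[OF \<open>Re w > 0\<close>] unfolding D_def[symmetric] by (simp add: field_simps)
  qed
qed

section \<open>An integral representation of the square root\<close>

lemma closed_segment_0_pi_half: "closed_segment 0 (complex_of_real pi / 2) = of_real ` {0..pi / 2}"
  using closed_segment_of_real[of 0 "pi / 2", where 'a = complex] by (simp add: closed_segment_eq_real_ivl)

lemma Re_csqrt_pos:
  assumes "Re w > 0"
  shows "Re (csqrt w) > 0"
proof -
  have "Re (csqrt w) \<noteq> 0"
  proof
    assume "Re (csqrt w) = 0"
    have "w = (csqrt w)\<^sup>2"
      by simp
    also have "Re \<dots> = - (Im (csqrt w))\<^sup>2"
      using \<open>Re (csqrt w) = 0\<close> by (simp add: power2_eq_square)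
    finally show False
      using assms by (smt (verit) zero_le_power2)
  qed
  then show ?thesis
    using Re_csqrt[of w] by simp
qed

lemma Ln_ii_times:
  assumes "Re a > 0"
  shows "Ln (\<i> * a) = Ln a + \<i> * of_real pi / 2" and "Ln (- (\<i> * a)) = Ln a - \<i> * of_real pi / 2"
proof -
  have "a \<noteq> 0"
    using assms by auto
  then show *: "Ln (\<i> * a) = Ln a + \<i> * of_real pi / 2"
    using assms by (simp add: Ln_times_ii)
  have "Ln (- (\<i> * a)) = Ln (\<i> * a) - \<i> * of_real pi"
    using Ln_minus[of "\<i> * a"] assms \<open>a \<noteq> 0\<close> by simp
  then show "Ln (- (\<i> * a)) = Ln a - \<i> * of_real pi / 2"
    by (simp add: *)
qed

lemma sin_plus_ii_cos_notin_nonpos_Reals: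
  assumes "Re a \<noteq> 0" and "0 \<le> t" "t \<le> pi / 2"
  shows "complex_of_real (sin t) + \<i> * a * complex_of_real (cos t) \<notin> \<real>\<^sub>\<le>\<^sub>0"
proof (cases "cos t = 0")
  case True
  then have "sin t = 1"
    using assms(2,3) sin_cos_squared_add[of t] sin_ge_zero[of t] power2_eq_1_iff[of "sin t"]
    by auto
  then show ?thesis
    using True by (simp add: complex_nonpos_Reals_iff)
next
  case False
  then show ?thesis
    using assms by (simp add: complex_nonpos_Reals_iff)
qed

lemma has_field_derivative_sqrt_kernel_primitive:
  fixes a \<theta> :: complex
  assumes "sin \<theta> + \<i> * a * cos \<theta> \<notin> \<real>\<^sub>\<le>\<^sub>0" and "sin \<theta> - \<i> * a * cos \<theta> \<notin> \<real>\<^sub>\<le>\<^sub>0"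
  shows "((\<lambda>\<theta>. \<i> * a / 2 * (Ln (sin \<theta> + \<i> * a * cos \<theta>) - Ln (sin \<theta> - \<i> * a * cos \<theta>)))
           has_field_derivative a * a / ((sin \<theta>)\<^sup>2 + a * a * (cos \<theta>)\<^sup>2)) (at \<theta>)"
proof -
  define p where "p = sin \<theta> + \<i> * a * cos \<theta>"
  define q where "q = sin \<theta> - \<i> * a * cos \<theta>"
  let ?dp = "cos \<theta> - \<i> * a * sin \<theta>" and ?dq = "cos \<theta> + \<i> * a * sin \<theta>"
  have "((\<lambda>\<theta>. sin \<theta> + \<i> * a * cos \<theta>) has_field_derivative ?dp) (at \<theta>)"
    "((\<lambda>\<theta>. sin \<theta> - \<i> * a * cos \<theta>) has_field_derivative ?dq) (at \<theta>)"
    by (auto intro!: derivative_eq_intros)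
  then have deriv: "((\<lambda>\<theta>. \<i> * a / 2 * (Ln (sin \<theta> + \<i> * a * cos \<theta>) - Ln (sin \<theta> - \<i> * a * cos \<theta>)))
      has_field_derivative \<i> * a / 2 * (inverse p * ?dp - inverse q * ?dq)) (at \<theta>)"
    unfolding p_def q_def using assms
    by (intro DERIV_cmult DERIV_diff DERIV_chain2[OF has_field_derivative_Ln])
  have "?dp * q - ?dq * p = -2 * \<i> * a * ((sin \<theta>)\<^sup>2 + (cos \<theta>)\<^sup>2)"
    unfolding p_def q_def power2_eq_square by algebra
  then have num: "?dp * q - ?dq * p = -2 * \<i> * a"
    by simp
  have "p \<noteq> 0" "q \<noteq> 0"
    using assms by (auto simp: p_def q_def)
  then have "\<i> * a / 2 * (inverse p * ?dp - inverse q * ?dq) = \<i> * a / 2 * ((?dp * q - ?dq * p) / (p * q))"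
    by (simp add: field_simps)
  also have "\<dots> = a * a / (p * q)"
    unfolding num by (simp add: field_simps)
  also have "p * q = (sin \<theta>)\<^sup>2 + a * a * (cos \<theta>)\<^sup>2"
    by (simp add: p_def q_def power2_eq_square algebra_simps)
  finally show ?thesis
    using deriv by (simp only:)
qed

text \<open>With \<open>a = \<surd>w\<close> the primitive above takes the values \<open>-\<pi> a/2\<close> at \<open>0\<close> and \<open>0\<close> at \<open>\<pi>/2\<close>.\<close>

lemma has_contour_integral_csqrt:
  assumes "Re w > 0"
  shows "((\<lambda>\<theta>. w / ((sin \<theta>)\<^sup>2 + w * (cos \<theta>)\<^sup>2)) has_contour_integral (csqrt w * of_real pi / 2))
           (linepath 0 (complex_of_real pi / 2))"
proof -
  define a where "a = csqrt w"
  have "Re a > 0"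
    using Re_csqrt_pos[OF assms] by (simp add: a_def)
  have aa: "a * a = w"
    using power2_csqrt[of w] by (simp add: a_def power2_eq_square)
  define F where "F \<theta> = \<i> * a / 2 * (Ln (sin \<theta> + \<i> * a * cos \<theta>) - Ln (sin \<theta> - \<i> * a * cos \<theta>))" for \<theta>
  let ?S = "closed_segment 0 (complex_of_real pi / 2)"
  have F_deriv: "(F has_field_derivative w / ((sin \<theta>)\<^sup>2 + w * (cos \<theta>)\<^sup>2)) (at \<theta>)"
    if \<theta>: "\<theta> \<in> ?S" for \<theta>
  proof -
    obtain t where t: "\<theta> = of_real t" "0 \<le> t" "t \<le> pi / 2"
      using \<theta> by (auto simp: closed_segment_0_pi_half)
    have "sin \<theta> + \<i> * a * cos \<theta> = of_real (sin t) + \<i> * a * of_real (cos t)"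
      "sin \<theta> - \<i> * a * cos \<theta> = of_real (sin t) + \<i> * (- a) * of_real (cos t)"
      by (simp_all add: t(1) sin_of_real cos_of_real)
    then have "sin \<theta> + \<i> * a * cos \<theta> \<notin> \<real>\<^sub>\<le>\<^sub>0" "sin \<theta> - \<i> * a * cos \<theta> \<notin> \<real>\<^sub>\<le>\<^sub>0"
      using sin_plus_ii_cos_notin_nonpos_Reals[OF _ t(2,3), of a]
        sin_plus_ii_cos_notin_nonpos_Reals[OF _ t(2,3), of "- a"] \<open>Re a > 0\<close>
      by simp_all
    then have "(F has_field_derivative a * a / ((sin \<theta>)\<^sup>2 + a * a * (cos \<theta>)\<^sup>2)) (at \<theta>)"
      unfolding F_def by (rule has_field_derivative_sqrt_kernel_primitive)
    then show ?thesis
      unfolding aa .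
  qed
  have "((\<lambda>\<theta>. w / ((sin \<theta>)\<^sup>2 + w * (cos \<theta>)\<^sup>2)) has_contour_integral
      F (pathfinish (linepath 0 (complex_of_real pi / 2))) - F (pathstart (linepath 0 (complex_of_real pi / 2))))
      (linepath 0 (complex_of_real pi / 2))"
    by (rule contour_integral_primitive[where S = ?S, OF has_field_derivative_at_within[OF F_deriv]])
      (simp_all only: valid_path_linepath path_image_linepath subset_refl)
  moreover have "F (complex_of_real pi / 2) = 0"
    by (simp add: F_def)
  moreover have "F 0 = - (a * of_real pi / 2)"
    unfolding F_def by (simp add: Ln_ii_times[OF \<open>Re a > 0\<close>] field_simps)
  ultimately show ?thesis
    by (simp only: pathfinish_linepath pathstart_linepath diff_0 minus_minus a_def)
qed

section \<open>The square root as an integral of resolvents\<close>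

lemma pencil_sin_cos_of_real:
  "pencil ((sin (of_real t))\<^sup>2) ((cos (of_real t))\<^sup>2) B = pencil (of_real ((sin t)\<^sup>2)) (of_real ((cos t)\<^sup>2)) B"
  by (simp add: sin_of_real cos_of_real)

lemma invertible_pencil_sin_cos:
  assumes "accretive B" and "\<theta> \<in> closed_segment 0 (complex_of_real pi / 2)"
  shows "invertible (pencil ((sin \<theta>)\<^sup>2) ((cos \<theta>)\<^sup>2) B)"
proof -
  obtain t where "\<theta> = of_real t"
    using assms(2) by (auto simp: closed_segment_0_pi_half)
  then show ?thesis
    using invertible_pencil[OF assms(1), of "(sin t)\<^sup>2" "(cos t)\<^sup>2"] by (simp add: pencil_sin_cos_of_real)
qed

lemma continuous_on_pencil_inverse_nth:
  assumes "accretive B"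
  shows "continuous_on (closed_segment 0 (complex_of_real pi / 2))
           (\<lambda>\<theta>. (X ** matrix_inv (pencil ((sin \<theta>)\<^sup>2) ((cos \<theta>)\<^sup>2) B)) $ i $ j)"
proof -
  have "(\<lambda>\<theta>. pencil ((sin \<theta>)\<^sup>2) ((cos \<theta>)\<^sup>2) B $ k $ l) holomorphic_on S" for k l S
    unfolding pencil_nth by (cases "k = l") (simp_all add: holomorphic_intros)
  then have "(\<lambda>\<theta>. matrix_inv (pencil ((sin \<theta>)\<^sup>2) ((cos \<theta>)\<^sup>2) B) $ k $ j) holomorphic_on
      closed_segment 0 (complex_of_real pi / 2)" for k
    by (rule holomorphic_on_matrix_inv_nth)
      (simp add: invertible_det_nz[symmetric] invertible_pencil_sin_cos assms)
  then show ?thesis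
    unfolding matrix_matrix_mult_def vec_lambda_beta
    by (intro holomorphic_on_imp_continuous_on holomorphic_intros)
qed

lemma sqrt_kernel_denominator_nonzero:
  assumes "Re w > 0" and "\<theta> \<in> closed_segment 0 (complex_of_real pi / 2)"
  shows "(sin \<theta>)\<^sup>2 + w * (cos \<theta>)\<^sup>2 \<noteq> 0"
proof -
  obtain t where "\<theta> = of_real t"
    using assms(2) by (auto simp: closed_segment_0_pi_half)
  then have "(sin \<theta>)\<^sup>2 + w * (cos \<theta>)\<^sup>2 = of_real ((sin t)\<^sup>2) + of_real ((cos t)\<^sup>2) * w"
    by (simp add: sin_of_real cos_of_real mult.commute)
  also have "\<dots> \<noteq> 0"
    by (rule add_mult_nonzero_if_Re_pos) (use assms(1) in simp_all)
  finally show ?thesis .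
qed

lemma continuous_on_sqrt_kernel:
  assumes "P \<subseteq> {w. Re w > 0}" and "continuous_on P \<psi>"
  shows "continuous_on (P \<times> closed_segment 0 (complex_of_real pi / 2))
           (\<lambda>(w, \<theta>). w / ((sin \<theta>)\<^sup>2 + w * (cos \<theta>)\<^sup>2) * \<psi> w)"
proof -
  have "continuous_on (P \<times> closed_segment 0 (complex_of_real pi / 2))
      (\<lambda>p. fst p / ((sin (snd p))\<^sup>2 + fst p * (cos (snd p))\<^sup>2))"
    using assms(1) sqrt_kernel_denominator_nonzero by (intro continuous_intros) auto
  moreover have "continuous_on (P \<times> closed_segment 0 (complex_of_real pi / 2)) (\<lambda>p. \<psi> (fst p))"
    by (rule continuous_on_compose2[OF assms(2) continuous_on_fst]) auto
  ultimately show ?thesis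
    unfolding case_prod_beta by (rule continuous_on_mult)
qed

lemma contour_integral_csqrt_mult_circlepath:
  assumes right: "path_image (circlepath c r) \<subseteq> {w. Re w > 0}"
    and cont: "continuous_on (path_image (circlepath c r)) \<psi>"
  shows "contour_integral (circlepath c r) (\<lambda>w. csqrt w * \<psi> w)
       = 2 / of_real pi * contour_integral (linepath 0 (complex_of_real pi / 2))
           (\<lambda>\<theta>. contour_integral (circlepath c r) (\<lambda>w. w / ((sin \<theta>)\<^sup>2 + w * (cos \<theta>)\<^sup>2) * \<psi> w))"
proof -
  let ?C = "circlepath c r" and ?L = "linepath 0 (complex_of_real pi / 2)"
  have "continuous_on (path_image ?C) csqrt"
    using right by (intro continuous_on_subset[OF continuous_on_csqrt]) (auto simp: complex_nonpos_Reals_iff)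
  then have "(\<lambda>w. csqrt w * \<psi> w) contour_integrable_on ?C"
    using cont by (intro contour_integrable_continuous_circlepath continuous_on_mult) auto
  then have "of_real pi / 2 * contour_integral ?C (\<lambda>w. csqrt w * \<psi> w)
      = contour_integral ?C (\<lambda>w. of_real pi / 2 * (csqrt w * \<psi> w))"
    by (rule contour_integral_lmul[symmetric])
  also have "\<dots> = contour_integral ?C (\<lambda>w. contour_integral ?L (\<lambda>\<theta>. w / ((sin \<theta>)\<^sup>2 + w * (cos \<theta>)\<^sup>2) * \<psi> w))"
  proof (rule contour_integral_eq)
    fix w
    assume "w \<in> path_image ?C"
    then have kernel: "((\<lambda>\<theta>. w / ((sin \<theta>)\<^sup>2 + w * (cos \<theta>)\<^sup>2)) has_contour_integral csqrt w * of_real pi / 2) ?L"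
      using right by (intro has_contour_integral_csqrt) auto
    show "of_real pi / 2 * (csqrt w * \<psi> w)
        = contour_integral ?L (\<lambda>\<theta>. w / ((sin \<theta>)\<^sup>2 + w * (cos \<theta>)\<^sup>2) * \<psi> w)"
      using contour_integral_unique[OF has_contour_integral_rmul[OF kernel, of "\<psi> w"]] by simp
  qed
  also have "\<dots> = contour_integral ?L (\<lambda>\<theta>. contour_integral ?C (\<lambda>w. w / ((sin \<theta>)\<^sup>2 + w * (cos \<theta>)\<^sup>2) * \<psi> w))"
  proof (rule contour_integral_swap)
    show "continuous_on (path_image ?C \<times> path_image ?L) (\<lambda>(w, \<theta>). w / ((sin \<theta>)\<^sup>2 + w * (cos \<theta>)\<^sup>2) * \<psi> w)"
      using continuous_on_sqrt_kernel[OF right cont] by simp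
    show "continuous_on {0..1} (\<lambda>t. vector_derivative ?C (at t))"
      by (simp add: vector_derivative_circlepath) (intro continuous_intros)
  qed simp_all
  finally show ?thesis
    by (simp add: field_simps)
qed

lemma psqrt_nth:
  assumes "sqrt_circle B = (c, r)"
  shows "psqrt B $ i $ j = contour_integral (circlepath c r) (\<lambda>w. csqrt w * resolvent B w $ i $ j)
                             / (2 * of_real pi * \<i>)"
  by (simp add: psqrt_def resolvent_def assms)

lemma contour_integral_sqrt_kernel_resolvent_nth:
  fixes B :: "complex^'n^'n"
  assumes "accretive B" and "\<theta> \<in> closed_segment 0 (complex_of_real pi / 2)"
    and "0 < r" "cball c r \<subseteq> {w. Re w > 0}" "\<And>l. eigval B l \<Longrightarrow> l \<in> ball c r"
  shows "contour_integral (circlepath c r) (\<lambda>w. w / ((sin \<theta>)\<^sup>2 + w * (cos \<theta>)\<^sup>2) * resolvent B w $ i $ j)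
       = 2 * of_real pi * \<i> * (B ** matrix_inv (pencil ((sin \<theta>)\<^sup>2) ((cos \<theta>)\<^sup>2) B)) $ i $ j"
proof -
  obtain t where t: "\<theta> = of_real t"
    using assms(2) by (auto simp: closed_segment_0_pi_half)
  have "(sin \<theta>)\<^sup>2 + w * (cos \<theta>)\<^sup>2 = of_real ((sin t)\<^sup>2) + of_real ((cos t)\<^sup>2) * w" for w
    by (simp add: t sin_of_real cos_of_real mult.commute)
  moreover have "pencil ((sin \<theta>)\<^sup>2) ((cos \<theta>)\<^sup>2) B = pencil (of_real ((sin t)\<^sup>2)) (of_real ((cos t)\<^sup>2)) B"
    unfolding t by (rule pencil_sin_cos_of_real)
  ultimately show ?thesis
    by (simp only:)
      (rule contour_integral_unique[OF has_contour_integral_pencil_resolvent_nth[OF assms(1) _ _ _ assms(3-5)]],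
        simp_all)
qed

lemma psqrt_nth_eq_integral:
  fixes B :: "complex^'n^'n"
  assumes "accretive B"
  shows "psqrt B $ i $ j = 2 / of_real pi * contour_integral (linepath 0 (complex_of_real pi / 2))
           (\<lambda>\<theta>. (B ** matrix_inv (pencil ((sin \<theta>)\<^sup>2) ((cos \<theta>)\<^sup>2) B)) $ i $ j)"
proof -
  obtain c r where cr: "sqrt_circle B = (c, r)" and "0 < r" and right: "cball c r \<subseteq> {w. Re w > 0}"
    and spec: "\<And>l. eigval B l \<Longrightarrow> l \<in> ball c r"
    using sqrt_circle[OF assms] by blast
  let ?C = "circlepath c r" and ?L = "linepath 0 (complex_of_real pi / 2)"
  let ?X = "\<lambda>\<theta>. (B ** matrix_inv (pencil ((sin \<theta>)\<^sup>2) ((cos \<theta>)\<^sup>2) B)) $ i $ j"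
  have circle: "path_image ?C \<subseteq> {w. Re w > 0}"
    using right \<open>0 < r\<close> by (auto simp: sphere_cball[THEN subsetD])
  have "continuous_on (path_image ?C) (\<lambda>w. resolvent B w $ i $ j)"
    using spec \<open>0 < r\<close> by (intro holomorphic_on_imp_continuous_on holomorphic_on_resolvent_nth) force
  then have "psqrt B $ i $ j = 2 / of_real pi * contour_integral ?L
      (\<lambda>\<theta>. contour_integral ?C (\<lambda>w. w / ((sin \<theta>)\<^sup>2 + w * (cos \<theta>)\<^sup>2) * resolvent B w $ i $ j))
      / (2 * of_real pi * \<i>)"
    by (simp add: psqrt_nth[OF cr] contour_integral_csqrt_mult_circlepath[OF circle])
  also have "\<dots> = 2 / of_real pi * contour_integral ?L (\<lambda>\<theta>. 2 * of_real pi * \<i> * ?X \<theta>) / (2 * of_real pi * \<i>)"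
    by (intro arg_cong2[where f = "\<lambda>x y. x * y / _"] refl contour_integral_eq
        contour_integral_sqrt_kernel_resolvent_nth[OF assms _ \<open>0 < r\<close> right spec]) simp
  also have "\<dots> = 2 / of_real pi * contour_integral ?L ?X"
    using contour_integral_lmul[OF contour_integrable_continuous_linepath[OF
        continuous_on_pencil_inverse_nth[OF assms, where X = B]], of "2 * of_real pi * \<i>"]
    by simp
  finally show ?thesis .
qed

lemma transpose_psqrt:
  fixes B :: "complex^'n^'n"
  assumes "transpose B = B" and "accretive B"
  shows "transpose (psqrt B) = psqrt B"
proof -
  obtain c r where cr: "sqrt_circle B = (c, r)" and "0 < r" and spec: "\<And>l. eigval B l \<Longrightarrow> l \<in> ball c r"
    using sqrt_circle[OF assms(2)] by metis
  have "resolvent B w $ j $ i = resolvent B w $ i $ j" if "w \<in> path_image (circlepath c r)" for w i j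
  proof -
    have "\<not> eigval B w"
      using that spec[of w] \<open>0 < r\<close> by auto
    moreover have "transpose (mat w - B) = mat w - B"
      using assms(1) by (simp add: transpose_mat_diff)
    ultimately have "transpose (resolvent B w) = resolvent B w"
      by (simp add: resolvent_def matrix_inv_symmetric invertible_mat_diff_iff)
    then show ?thesis
      by (metis transpose_def vec_lambda_beta)
  qed
  then have "contour_integral (circlepath c r) (\<lambda>w. csqrt w * resolvent B w $ j $ i)
      = contour_integral (circlepath c r) (\<lambda>w. csqrt w * resolvent B w $ i $ j)" for i j
    by (intro contour_integral_eq) simp
  then have "psqrt B $ j $ i = psqrt B $ i $ j" for i j
    by (simp add: psqrt_nth[OF cr])
  then show ?thesis
    by (simp add: vec_eq_iff transpose_def)
qed

lemma has_integral_pos: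
  fixes g :: "real \<Rightarrow> real"
  assumes "(g has_integral I) {a..b}" and "a < b"
    and "continuous_on {a..b} g" and "\<And>x. x \<in> {a..b} \<Longrightarrow> g x > 0"
  shows "I > 0"
proof -
  obtain x0 where x0: "x0 \<in> {a..b}" "\<And>y. y \<in> {a..b} \<Longrightarrow> g x0 \<le> g y"
    using continuous_attains_inf[OF compact_Icc _ assms(3)] assms(2) by auto
  have "((\<lambda>x. g x0) has_integral (b - a) * g x0) {a..b}"
    using has_integral_const_real[of "g x0" a b] assms(2) by simp
  then have "(b - a) * g x0 \<le> I"
    using x0(2) by (rule has_integral_le[OF _ assms(1)])
  moreover have "(b - a) * g x0 > 0"
    using assms(2,4) x0(1) by simp
  ultimately show ?thesis
    by linarith
qed

lemma Re_contour_integral_linepath_Reals_pos: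
  fixes f :: "complex \<Rightarrow> complex" and a b :: real
  assumes "a < b" and cont: "continuous_on (closed_segment (of_real a) (of_real b)) f"
    and pos: "\<And>t. a \<le> t \<Longrightarrow> t \<le> b \<Longrightarrow> Re (f (of_real t)) > 0"
  shows "Re (contour_integral (linepath (of_real a) (of_real b)) f) > 0"
proof -
  have seg: "closed_segment (of_real a) (of_real b) = complex_of_real ` {a..b}"
    using closed_segment_of_real[of a b] assms(1) by (simp add: closed_segment_eq_real_ivl)
  have "(f has_contour_integral contour_integral (linepath (of_real a) (of_real b)) f) (linepath (of_real a) (of_real b))"
    using contour_integrable_continuous_linepath[OF cont] by (rule has_contour_integral_integral)
  then have "((\<lambda>x. f (of_real x)) has_integral contour_integral (linepath (of_real a) (of_real b)) f) {a..b}"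
    using has_contour_integral_linepath_Reals_iff[of "of_real a" "of_real b" f] assms(1) by simp
  then have integral: "((\<lambda>x. Re (f (of_real x))) has_integral
      Re (contour_integral (linepath (of_real a) (of_real b)) f)) {a..b}"
    using has_integral_linear[OF _ bounded_linear_Re] by (simp add: o_def)
  have "continuous_on {a..b} (\<lambda>x. f (of_real x))"
    by (rule continuous_on_compose2[OF cont]) (auto intro: continuous_intros simp: seg)
  then have "continuous_on {a..b} (\<lambda>x. Re (f (of_real x)))"
    by (intro continuous_intros)
  then show ?thesis
    by (rule has_integral_pos[OF integral assms(1)]) (use pos in auto)
qed

lemma qform_psqrt_eq_integral:
  fixes B :: "complex^'n^'n"
  assumes "accretive B"
  shows "qform v (psqrt B) = 2 / of_real pi * contour_integral (linepath 0 (complex_of_real pi / 2))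
           (\<lambda>\<theta>. qform v (B ** matrix_inv (pencil ((sin \<theta>)\<^sup>2) ((cos \<theta>)\<^sup>2) B)))"
proof -
  let ?L = "linepath 0 (complex_of_real pi / 2)"
  let ?X = "\<lambda>\<theta>. B ** matrix_inv (pencil ((sin \<theta>)\<^sup>2) ((cos \<theta>)\<^sup>2) B)"
  have "(\<lambda>\<theta>. ?X \<theta> $ i $ j) contour_integrable_on ?L" for i j
    by (rule contour_integrable_continuous_linepath[OF continuous_on_pencil_inverse_nth[OF assms]])
  then have "contour_integral ?L (\<lambda>\<theta>. qform v (?X \<theta>))
      = (\<Sum>i\<in>UNIV. \<Sum>j\<in>UNIV. of_real (v $ i * v $ j) * contour_integral ?L (\<lambda>\<theta>. ?X \<theta> $ i $ j))"
    unfolding qform_def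
    by (simp add: contour_integral_sum contour_integrable_sum contour_integrable_lmul contour_integral_lmul)
  then show ?thesis
    by (simp add: qform_def psqrt_nth_eq_integral[OF assms] sum_distrib_left mult_ac)
qed

lemma Re_qform_psqrt_pos:
  fixes B :: "complex^'n^'n"
  assumes "accretive B" and "v \<noteq> 0"
  shows "Re (qform v (psqrt B)) > 0"
proof -
  let ?f = "\<lambda>\<theta>. qform v (B ** matrix_inv (pencil ((sin \<theta>)\<^sup>2) ((cos \<theta>)\<^sup>2) B))"
  have "continuous_on (closed_segment 0 (complex_of_real pi / 2)) ?f"
    unfolding qform_def by (intro continuous_intros continuous_on_pencil_inverse_nth[OF assms(1)])
  moreover have "Re (?f (of_real t)) > 0" for t
    unfolding pencil_sin_cos_of_real
    by (rule Re_qform_pencil_inverse_pos[OF assms(1) _ _ _ assms(2)]) simp_all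
  ultimately have "Re (contour_integral (linepath 0 (complex_of_real pi / 2)) ?f) > 0"
    using Re_contour_integral_linepath_Reals_pos[of 0 "pi / 2" ?f]
    by (simp only: of_real_0 of_real_divide of_real_numeral pi_gt_zero half_gt_zero)
  then show ?thesis
    by (simp add: qform_psqrt_eq_integral[OF assms(1)])
qed

theorem lemma7p1:
  fixes B :: "complex^'n^'n" and \<delta> :: real
  assumes "\<delta> > 0" and "B \<in> Mplus \<delta>"
  shows "posdef (mRe (psqrt B))"
proof -
  have sym: "transpose B = B"
    using assms(2) by (simp add: Mplus_def)
  have "accretive B"
    by (rule accretive_if_posdef_mRe[OF sym posdef_mRe_if_Mplus[OF assms]])
  have "transpose (mRe (psqrt B)) = mRe (psqrt B)"
    by (simp add: transpose_mRe transpose_psqrt[OF sym \<open>accretive B\<close>])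
  moreover have "v \<bullet> (mRe (psqrt B) *v v) > 0" if "v \<noteq> 0" for v
    using Re_qform_psqrt_pos[OF \<open>accretive B\<close> that] by (simp add: Re_qform)
  ultimately show ?thesis
    by (simp add: posdef_def)
qed

end
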